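(* For every $n\in\mathbb N$, the tuple $(\mathbb{T}_{n+1}^-,\iota^n,\kappa^n)$ is a Kruskal derivative of the normal PO-dilator $M\circ\mathbb{T}_n$, where $\iota^n_X:X\to\mathbb{T}_{n+1}^-(X)$ is $\iota^n_X(x)=\overline x$ and $\kappa^n_X:M(\mathbb{T}_n(\mathbb{T}_{n+1}^-(X)))\to\mathbb{T}_{n+1}^-(X)$ is $\kappa^n_X([s_0,\dots,s_{m-1}])=0\star[\pi^n_X(s_0),\dots,\pi^n_X(s_{m-1})]$.
   Context: A quasi embedding between partial orders $X,Y$ is a function $f$ with $f(x)\leq_Y f(y)\Rightarrow x\leq_X y$; an embedding also satisfies the converse. $\mathrm{PO}$ is the category of partial orders and quasi embeddings. $[X]^{<\omega}$ denotes finite subsets, $[f]^{<\omega}(a)=\{f(x)\mid x\in a\}$. A PO-dilator is a functor $W:\mathrm{PO}\to\mathrm{PO}$ mapping embeddings to embeddings, with a natural transformation $\operatorname{supp}^W:W\Rightarrow[\cdot]^{<\omega}$ such that for every embedding $f:X\to Y$, $\operatorname{rng}(W(f))=\{\sigma\in W(Y)\mid\operatorname{supp}^W_Y(\sigma)\subseteq\operatorname{rng}(f)\}$. For finite $a,b\subseteq X$, $a\leq^{\mathrm{fin}}_X b$ iff every $x\in a$ has some $y\in b$ with $x\leq_X y$ ($z\leq^{\mathrm{fin}}_X b$ means $\{z\}\leq^{\mathrm{fin}}_X b$). $W$ is normal if $\sigma\leq_{W(X)}\tau$ implies $\operatorname{supp}^W_X(\sigma)\leq^{\mathrm{fin}}_X\operatorname{supp}^W_X(\tau)$.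 The composition $V\circ W$ of PO-dilators is the composite functor with $\operatorname{supp}^{V\circ W}_X(\sigma)=\bigcup\{\operatorname{supp}^W_X(s)\mid s\in\operatorname{supp}^V_{W(X)}(\sigma)\}$. A Kruskal fixed point of $W$ over $X$ is a partial order $Z$ with $\iota:X\to Z$, $\kappa:W(Z)\to Z$ such that $\operatorname{rng}(\iota)\cap\operatorname{rng}(\kappa)=\emptyset$ and, for all $x,y\in X$, $\sigma,\tau\in W(Z)$: $\iota(x)\leq_Z\iota(y)\Rightarrow x\leq_X y$; $\iota(x)\leq_Z\kappa(\tau)$ iff $\iota(x)\leq^{\mathrm{fin}}_Z\operatorname{supp}^W_Z(\tau)$; $\kappa(\sigma)\not\leq_Z\iota(y)$; $\kappa(\sigma)\leq_Z\kappa(\tau)$ iff ($\sigma\leq_{W(Z)}\tau$ or $\kappa(\sigma)\leq^{\mathrm{fin}}_Z\operatorname{supp}^W_Z(\tau)$). It is initial if for every Kruskal fixed point $(Z',\iota',\kappa')$ of $W$ over $X$ there is a unique quasi embedding $f:Z\to Z'$ with $f\circ\iota=\iota'$ and $f\circ\kappa=\kappa'\circ W(f)$. A Kruskal derivative of a normal PO-dilator $W$ is a tuple $(\mathcal T W,\iota,\kappa)$ with $\mathcal T W$ a normal PO-dilator and families $\iota_X:X\to\mathcal T W(X)$, $\kappa_X:W(\mathcal T W(X))\to\mathcal T W(X)$ such that (i) each $(\mathcal T W(X),\iota_X,\kappa_X)$ is an initial Kruskal fixed point of $W$ over $X$, and (ii) $\iota_Y\circ f=\mathcal T W(f)\circ\iota_X$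 and $\mathcal T W(f)\circ\kappa_X=\kappa_Y\circ W(\mathcal T W(f))$ for every quasi embedding $f:X\to Y$. $M$ is the multiset dilator: $M(X)$ is the set of finite multisets $[x_0,\dots,x_{m-1}]$ over $X$, with $[x_0,\dots,x_{m-1}]\leq_{M(X)}[y_0,\dots,y_{k-1}]$ iff there is an injection $g$ with $x_i\leq_X y_{g(i)}$ for all $i<m$, $M(f)([x_0,\dots])=[f(x_0),\dots]$, $\operatorname{supp}^M_X([x_0,\dots,x_{m-1}])=\{x_0,\dots,x_{m-1}\}$. For $n\in\mathbb N$ and a partial order $X$, $\mathbb{T}_n(X)$ is generated by $\overline x$ ($x\in X$) and $i\star\sigma$ ($\sigma\in M(\mathbb{T}_n(X))$, $i<n$); $\mathbb{T}_n^-(X)=\{\overline x\mid x\in X\}\cup\{0\star\sigma\mid\sigma\in M(\mathbb{T}_n(X))\}$ for $n>0$. The partial order $\leq_{\mathbb{T}_n(X)}$: $\overline x\leq t$ iff either $t=\overline y$ with $x\leq_X y$, or $t=j\star[t_0,\dots,t_{m-1}]$ and $\overline x\leq t_l$ for some $l$; $i\star\sigma\leq t$ iff either $t=i\star\tau$ with $\sigma\leq_{M(\mathbb{T}_n(X))}\tau$, or $t=j\star[t_0,\dots,t_{m-1}]$ with $j\geq i$ and $i\star\sigma\leq t_l$ for some $l$; $\mathbb{T}_n^-(X)$ carries the restricted order. $\mathbb{T}_n(f)(\overline x)=\overline{f(x)}$, $\mathbb{T}_n(f)(i\star[t_0,\dots])=i\star[\mathbb{T}_n(f)(t_0),\dots]$,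 $\mathbb{T}_n^-(f)$ its restriction; $\operatorname{supp}^{\mathbb{T}_n}_X(\overline x)=\{x\}$, $\operatorname{supp}^{\mathbb{T}_n}_X(i\star[t_0,\dots,t_{m-1}])=\bigcup_l\operatorname{supp}^{\mathbb{T}_n}_X(t_l)$, and $\operatorname{supp}^{\mathbb{T}_n^-}_X$ its restriction. With these, $\mathbb{T}_n$ and $\mathbb{T}_{n+1}^-$ are normal PO-dilators. $\pi^n_X:\mathbb{T}_n(\mathbb{T}_{n+1}^-(X))\to\mathbb{T}_{n+1}(X)$ is defined by $\pi^n_X(\overline t)=t$ and $\pi^n_X(i\star[s_0,\dots,s_{m-1}])=(i+1)\star[\pi^n_X(s_0),\dots,\pi^n_X(s_{m-1})]$. *)

theory Defs
  imports "HOL-Library.Multiset"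
begin

text \<open>A partial order is represented by its carrier set together with a relation
  (only the relation on the carrier is relevant).\<close>

type_synonym 'a po = "'a set \<times> ('a \<Rightarrow> 'a \<Rightarrow> bool)"

definition car :: "'a po \<Rightarrow> 'a set" where "car X = fst X"
definition leq :: "'a po \<Rightarrow> 'a \<Rightarrow> 'a \<Rightarrow> bool" where "leq X = snd X"

definition is_po :: "'a po \<Rightarrow> bool" where
  "is_po X \<longleftrightarrow>
     (\<forall>x\<in>car X. leq X x x) \<and>
     (\<forall>x\<in>car X. \<forall>y\<in>car X. leq X x y \<and> leq X y x \<longrightarrow> x = y) \<and>
     (\<forall>x\<in>car X. \<forall>y\<in>car X. \<forall>z\<in>car X. leq X x y \<and> leq X y z \<longrightarrow> leq X x z)"

definition qemb :: "('a \<Rightarrow> 'b) \<Rightarrow> 'a po \<Rightarrow> 'b po \<Rightarrow> bool" where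
  "qemb f X Y \<longleftrightarrow> (\<forall>x\<in>car X. f x \<in> car Y) \<and>
     (\<forall>x\<in>car X. \<forall>y\<in>car X. leq Y (f x) (f y) \<longrightarrow> leq X x y)"

definition emb :: "('a \<Rightarrow> 'b) \<Rightarrow> 'a po \<Rightarrow> 'b po \<Rightarrow> bool" where
  "emb f X Y \<longleftrightarrow> qemb f X Y \<and> (\<forall>x\<in>car X. \<forall>y\<in>car X. leq X x y \<longrightarrow> leq Y (f x) (f y))"

definition fin_le :: "('a \<Rightarrow> 'a \<Rightarrow> bool) \<Rightarrow> 'a set \<Rightarrow> 'a set \<Rightarrow> bool" where
  "fin_le le a b \<longleftrightarrow> (\<forall>x\<in>a. \<exists>y\<in>b. le x y)"

text \<open>Since the types change, the
  predicate takes separate type instances of the constituents; in the main theorem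
  they are instantiated with the same polymorphic constants at arbitrary types.
  \<open>Mid\<close>: action on maps of type a to a; \<open>Mab\<close>, \<open>Mbc\<close>, \<open>Mac\<close>: actions on maps
  between the indicated types.\<close>

definition po_dilator ::
  "('a po \<Rightarrow> 'u po) \<Rightarrow> ('a po \<Rightarrow> 'u \<Rightarrow> 'a set) \<Rightarrow>
   ('b po \<Rightarrow> 'v po) \<Rightarrow> ('b po \<Rightarrow> 'v \<Rightarrow> 'b set) \<Rightarrow>
   (('a \<Rightarrow> 'a) \<Rightarrow> 'u \<Rightarrow> 'u) \<Rightarrow> (('a \<Rightarrow> 'b) \<Rightarrow> 'u \<Rightarrow> 'v) \<Rightarrow>
   (('b \<Rightarrow> 'c) \<Rightarrow> 'v \<Rightarrow> 'w) \<Rightarrow> (('a \<Rightarrow> 'c) \<Rightarrow> 'u \<Rightarrow> 'w) \<Rightarrow> bool" where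
  "po_dilator Wa Sa Wb Sb Mid Mab Mbc Mac \<longleftrightarrow>
     \<comment> \<open>objects are mapped to partial orders; supports are finite subsets\<close>
     (\<forall>X. is_po X \<longrightarrow> is_po (Wa X) \<and>
        (\<forall>\<sigma>\<in>car (Wa X). finite (Sa X \<sigma>) \<and> Sa X \<sigma> \<subseteq> car X)) \<and>
     \<comment> \<open>functoriality: identities\<close>
     (\<forall>X f. is_po X \<and> (\<forall>x\<in>car X. f x = x) \<longrightarrow> (\<forall>\<sigma>\<in>car (Wa X). Mid f \<sigma> = \<sigma>)) \<and>
     \<comment> \<open>well-definedness on morphisms (maps agreeing on the carrier)\<close>
     (\<forall>X Y f g. is_po X \<and> is_po Y \<and> qemb f X Y \<and> (\<forall>x\<in>car X. f x = g x) \<longrightarrow>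
        (\<forall>\<sigma>\<in>car (Wa X). Mab f \<sigma> = Mab g \<sigma>)) \<and>
     \<comment> \<open>functoriality: composition\<close>
     (\<forall>X Y Z f g. is_po X \<and> is_po Y \<and> is_po Z \<and> qemb f X Y \<and> qemb g Y Z \<longrightarrow>
        (\<forall>\<sigma>\<in>car (Wa X). Mac (g \<circ> f) \<sigma> = Mbc g (Mab f \<sigma>))) \<and>
     \<comment> \<open>morphisms, naturality of supports, embeddings, support condition\<close>
     (\<forall>X Y f. is_po X \<and> is_po Y \<and> qemb f X Y \<longrightarrow>
        qemb (Mab f) (Wa X) (Wb Y) \<and>
        (\<forall>\<sigma>\<in>car (Wa X). Sb Y (Mab f \<sigma>) = f ` Sa X \<sigma>) \<and>
        (emb f X Y \<longrightarrow> emb (Mab f) (Wa X) (Wb Y) \<and>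
           Mab f ` car (Wa X) = {\<sigma>\<in>car (Wb Y). Sb Y \<sigma> \<subseteq> f ` car X}))"

definition normal :: "('a po \<Rightarrow> 'u po) \<Rightarrow> ('a po \<Rightarrow> 'u \<Rightarrow> 'a set) \<Rightarrow> bool" where
  "normal Wo Ws \<longleftrightarrow> (\<forall>X. is_po X \<longrightarrow>
     (\<forall>\<sigma>\<in>car (Wo X). \<forall>\<tau>\<in>car (Wo X).
        leq (Wo X) \<sigma> \<tau> \<longrightarrow> fin_le (leq X) (Ws X \<sigma>) (Ws X \<tau>)))"

definition comp_obj :: "('b po \<Rightarrow> 'c po) \<Rightarrow> ('a po \<Rightarrow> 'b po) \<Rightarrow> 'a po \<Rightarrow> 'c po" where
  "comp_obj Vo Wo X = Vo (Wo X)"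

definition comp_supp ::
  "('b po \<Rightarrow> 'c \<Rightarrow> 'b set) \<Rightarrow> ('a po \<Rightarrow> 'b po) \<Rightarrow> ('a po \<Rightarrow> 'b \<Rightarrow> 'a set) \<Rightarrow> 'a po \<Rightarrow> 'c \<Rightarrow> 'a set" where
  "comp_supp Vs Wo Ws X \<sigma> = \<Union> {Ws X s | s. s \<in> Vs (Wo X) \<sigma>}"


definition kfp ::
  "('z po \<Rightarrow> 'w po) \<Rightarrow> ('z po \<Rightarrow> 'w \<Rightarrow> 'z set) \<Rightarrow> 'a po \<Rightarrow> 'z po \<Rightarrow> ('a \<Rightarrow> 'z) \<Rightarrow> ('w \<Rightarrow> 'z) \<Rightarrow> bool" where
  "kfp Wo Ws X Z \<iota> \<kappa> \<longleftrightarrow>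
     is_po Z \<and> (\<forall>x\<in>car X. \<iota> x \<in> car Z) \<and> (\<forall>\<sigma>\<in>car (Wo Z). \<kappa> \<sigma> \<in> car Z) \<and>
     \<iota> ` car X \<inter> \<kappa> ` car (Wo Z) = {} \<and>
     (\<forall>x\<in>car X. \<forall>y\<in>car X. leq Z (\<iota> x) (\<iota> y) \<longrightarrow> leq X x y) \<and>
     (\<forall>x\<in>car X. \<forall>\<tau>\<in>car (Wo Z). leq Z (\<iota> x) (\<kappa> \<tau>) \<longleftrightarrow> fin_le (leq Z) {\<iota> x} (Ws Z \<tau>)) \<and>
     (\<forall>\<sigma>\<in>car (Wo Z). \<forall>y\<in>car X. \<not> leq Z (\<kappa> \<sigma>) (\<iota> y)) \<and>
     (\<forall>\<sigma>\<in>car (Wo Z). \<forall>\<tau>\<in>car (Wo Z). leq Z (\<kappa> \<sigma>) (\<kappa> \<tau>) \<longleftrightarrow>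
        (leq (Wo Z) \<sigma> \<tau> \<or> fin_le (leq Z) {\<kappa> \<sigma>} (Ws Z \<tau>)))"

text \<open>Initiality: the competing fixed points range over partial orders on an arbitrary
  type \<open>'y\<close> (universally quantified at the level of the theorem).\<close>
definition initial_kfp ::
  "('z po \<Rightarrow> 'w po) \<Rightarrow> ('z po \<Rightarrow> 'w \<Rightarrow> 'z set) \<Rightarrow>
   ('y po \<Rightarrow> 'v po) \<Rightarrow> ('y po \<Rightarrow> 'v \<Rightarrow> 'y set) \<Rightarrow> (('z \<Rightarrow> 'y) \<Rightarrow> 'w \<Rightarrow> 'v) \<Rightarrow>
   'a po \<Rightarrow> 'z po \<Rightarrow> ('a \<Rightarrow> 'z) \<Rightarrow> ('w \<Rightarrow> 'z) \<Rightarrow> bool" where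
  "initial_kfp Wo Ws Wo' Ws' Wm X Z \<iota> \<kappa> \<longleftrightarrow>
     kfp Wo Ws X Z \<iota> \<kappa> \<and>
     (\<forall>Z' \<iota>' \<kappa>'. kfp Wo' Ws' X Z' \<iota>' \<kappa>' \<longrightarrow>
        (\<exists>f. qemb f Z Z' \<and> (\<forall>x\<in>car X. f (\<iota> x) = \<iota>' x) \<and>
             (\<forall>\<sigma>\<in>car (Wo Z). f (\<kappa> \<sigma>) = \<kappa>' (Wm f \<sigma>)) \<and>
             (\<forall>g. qemb g Z Z' \<and> (\<forall>x\<in>car X. g (\<iota> x) = \<iota>' x) \<and>
                  (\<forall>\<sigma>\<in>car (Wo Z). g (\<kappa> \<sigma>) = \<kappa>' (Wm g \<sigma>)) \<longrightarrow>
                  (\<forall>z\<in>car Z. g z = f z))))"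

definition mle :: "('a \<Rightarrow> 'a \<Rightarrow> bool) \<Rightarrow> 'a multiset \<Rightarrow> 'a multiset \<Rightarrow> bool" where
  "mle R M N \<longleftrightarrow> (\<exists>xs ys g. mset xs = M \<and> mset ys = N \<and> inj_on g {..<length xs} \<and>
      (\<forall>i<length xs. g i < length ys \<and> R (xs ! i) (ys ! g i)))"

lemma mle_mono [mono]: "R \<le> S \<Longrightarrow> mle R \<le> mle S"
  unfolding mle_def le_fun_def le_bool_def by blast

definition MO :: "'a po \<Rightarrow> 'a multiset po" where
  "MO X = ({\<sigma>. set_mset \<sigma> \<subseteq> car X}, mle (leq X))"

definition MS :: "'a po \<Rightarrow> 'a multiset \<Rightarrow> 'a set" where
  "MS X \<sigma> = set_mset \<sigma>"

definition MM :: "('a \<Rightarrow> 'b) \<Rightarrow> 'a multiset \<Rightarrow> 'b multiset" where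
  "MM f \<sigma> = image_mset f \<sigma>"

text \<open>\<open>Bar x\<close> is \<open>x\<close> with an overline, \<open>Star i \<sigma>\<close> is \<open>i \<star> \<sigma>\<close>.\<close>
datatype 'a ktree = Bar 'a | Star nat "'a ktree multiset"

inductive_set tcar :: "nat \<Rightarrow> 'a set \<Rightarrow> 'a ktree set" for n :: nat and A :: "'a set" where
  bar: "x \<in> A \<Longrightarrow> Bar x \<in> tcar n A"
| star: "i < n \<Longrightarrow> (\<forall>t\<in>#\<sigma>. t \<in> tcar n A) \<Longrightarrow> Star i \<sigma> \<in> tcar n A"

inductive tle :: "('a \<Rightarrow> 'a \<Rightarrow> bool) \<Rightarrow> 'a ktree \<Rightarrow> 'a ktree \<Rightarrow> bool" for le where
  bar_bar: "le x y \<Longrightarrow> tle le (Bar x) (Bar y)"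
| bar_star: "t \<in># ts \<Longrightarrow> tle le (Bar x) t \<Longrightarrow> tle le (Bar x) (Star j ts)"
| star_star: "mle (tle le) \<sigma> \<tau> \<Longrightarrow> tle le (Star i \<sigma>) (Star i \<tau>)"
| star_below: "i \<le> j \<Longrightarrow> t \<in># ts \<Longrightarrow> tle le (Star i \<sigma>) t \<Longrightarrow> tle le (Star i \<sigma>) (Star j ts)"

definition TO :: "nat \<Rightarrow> 'a po \<Rightarrow> 'a ktree po" where
  "TO n X = (tcar n (car X), tle (leq X))"

definition TS :: "'a po \<Rightarrow> 'a ktree \<Rightarrow> 'a set" where
  "TS X t = set_ktree t"

text \<open>\<open>T_n^-(X)\<close> (used for \<open>n > 0\<close>), with the restricted order and support.\<close>
definition TmO :: "nat \<Rightarrow> 'a po \<Rightarrow> 'a ktree po" where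
  "TmO n X = ({Bar x | x. x \<in> car X} \<union> {Star 0 \<sigma> | \<sigma>. Star 0 \<sigma> \<in> tcar n (car X)}, tle (leq X))"

definition TmS :: "'a po \<Rightarrow> 'a ktree \<Rightarrow> 'a set" where
  "TmS X t = set_ktree t"

definition WO :: "nat \<Rightarrow> 'a po \<Rightarrow> 'a ktree multiset po" where
  "WO n = comp_obj MO (TO n)"

definition WS :: "nat \<Rightarrow> 'a po \<Rightarrow> 'a ktree multiset \<Rightarrow> 'a set" where
  "WS n = comp_supp MS (TO n) TS"

definition WM :: "('a \<Rightarrow> 'b) \<Rightarrow> 'a ktree multiset \<Rightarrow> 'b ktree multiset" where
  "WM f = MM (map_ktree f)"

text \<open>\<open>\<pi>^n_X : T_n(T_{n+1}^-(X)) \<rightarrow> T_{n+1}(X)\<close>.\<close>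
primrec pi :: "'a ktree ktree \<Rightarrow> 'a ktree" where
  "pi (Bar t) = t"
| "pi (Star i \<sigma>) = Star (Suc i) (image_mset pi \<sigma>)"

definition iota :: "'a \<Rightarrow> 'a ktree" where "iota x = Bar x"

definition kappa :: "'a ktree ktree multiset \<Rightarrow> 'a ktree" where
  "kappa \<sigma> = Star 0 (image_mset pi \<sigma>)"

end

(*
  The map pi identifies T_n(T^-_{n+1}(X)) with T_{n+1}(X): it raises every label by one, and
  its inverse cuts a tree of T_{n+1}(X) at its subtrees of label 0, i.e. at the elements of
  T^-_{n+1}(X). Transported along pi, the order of T_n(T^-_{n+1}(X)) is the order of T_{n+1}(X),
  and a tree of label 0 lies below pi(s) iff it lies below a leaf of s. Since
  kappa(sigma) = 0 * pi(sigma), these two facts turn the clauses defining the order between trees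
  0 * sigma into the equations of a Kruskal fixed point.

  For initiality, a morphism F into another fixed point (Z, i, k) is forced to satisfy
  F(bar x) = i(x) and F(0 * sigma) = k(T_n(F)(pi^-1(sigma))), a recursion on the size of trees.
  Induction on size also shows that F reflects the order: the fixed point equations of Z reduce a
  comparison of two values of F to comparisons of values of F at smaller trees.
*)

theory Submission
  imports Defs
begin

section \<open>The multiset order\<close>

lemma is_po_iff:
  "is_po X \<longleftrightarrow> reflp_on (car X) (leq X) \<and> antisymp_on (car X) (leq X) \<and> transp_on (car X) (leq X)"
  unfolding is_po_def reflp_on_def antisymp_on_def transp_on_def by blast

lemma is_po_restrict: "is_po X \<Longrightarrow> A \<subseteq> car X \<Longrightarrow> is_po (A, leq X)"
  by (auto simp: is_po_iff car_def leq_def intro: reflp_on_subset antisymp_on_subset transp_on_subset)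

inductive mset_emb :: "('a \<Rightarrow> 'b \<Rightarrow> bool) \<Rightarrow> 'a multiset \<Rightarrow> 'b multiset \<Rightarrow> bool" for R where
  empty: "mset_emb R {#} N"
| add: "R a b \<Longrightarrow> mset_emb R M N \<Longrightarrow> mset_emb R (add_mset a M) (add_mset b N)"

lemma mset_emb_subset_mset: "mset_emb R M N \<Longrightarrow> N \<subseteq># N' \<Longrightarrow> mset_emb R M N'"
proof (induction arbitrary: N' rule: mset_emb.induct)
  case (add a b M N)
  then have "b \<in># N'"
    by (meson insert_subset_eq_iff)
  then obtain N'' where N': "N' = add_mset b N''"
    by (metis multi_member_split)
  with add show ?case
    by (simp add: mset_emb.add)
qed (rule mset_emb.empty)

lemma mset_emb_mset_zip:
  "length xs = length ys \<Longrightarrow> \<forall>i<length xs. R (xs ! i) (ys ! i) \<Longrightarrow> mset_emb R (mset xs) (mset ys)"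
proof (induction xs arbitrary: ys)
  case (Cons x xs)
  then obtain y ys' where ys: "ys = y # ys'"
    by (cases ys) auto
  with Cons have "R x y" "mset_emb R (mset xs) (mset ys')"
    by force+
  with ys show ?case
    by (simp add: mset_emb.add)
qed (simp add: mset_emb.empty)

lemma mset_map_nth_subseteq:
  assumes "distinct is" "set is \<subseteq> {..<length ys}"
  shows "mset (map ((!) ys) is) \<subseteq># mset ys"
proof -
  have "mset is = mset_set (set is)"
    using assms(1) by (metis mset_set_set)
  also have "\<dots> \<subseteq># mset_set {..<length ys}"
    using assms(2) by (intro subset_imp_msubset_mset_set) auto
  also have "\<dots> = mset [0..<length ys]"
    by (metis atLeast_upt distinct_upt mset_set_set)
  finally show ?thesis
    by (metis image_mset_subseteq_mono map_nth mset_map)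
qed

lemma mset_emb_if_mle: "mle R M N \<Longrightarrow> mset_emb R M N"
proof -
  assume "mle R M N"
  then obtain xs ys g where M: "mset xs = M" and N: "mset ys = N" and g: "inj_on g {..<length xs}"
    and R: "\<forall>i<length xs. g i < length ys \<and> R (xs ! i) (ys ! g i)"
    unfolding mle_def by blast
  let ?is = "map g [0..<length xs]"
  have "mset_emb R (mset xs) (mset (map ((!) ys) ?is))"
    using R by (intro mset_emb_mset_zip) auto
  moreover have "mset (map ((!) ys) ?is) \<subseteq># mset ys"
    using g R by (intro mset_map_nth_subseteq) (auto simp: distinct_map atLeast_upt)
  ultimately show "mset_emb R M N"
    using M N mset_emb_subset_mset by blast
qed

lemma mle_if_mset_emb: "mset_emb R M N \<Longrightarrow> mle R M N"
proof (induction rule: mset_emb.induct)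
  case (empty N)
  obtain ys where "mset ys = N"
    using ex_mset by blast
  then show ?case
    unfolding mle_def by (intro exI[of _ "[]"] exI[of _ ys]) simp
next
  case (add a b M N)
  then obtain xs ys g where M: "mset xs = M" and N: "mset ys = N" and g: "inj_on g {..<length xs}"
    and R: "\<forall>i<length xs. g i < length ys \<and> R (xs ! i) (ys ! g i)"
    unfolding mle_def by blast
  define g' where "g' i = (case i of 0 \<Rightarrow> 0 | Suc j \<Rightarrow> Suc (g j))" for i
  have "inj_on g' {..<length (a # xs)}"
    using g by (auto simp: inj_on_def g'_def split: nat.splits)
  moreover have "\<forall>i<length (a # xs). g' i < length (b # ys) \<and> R ((a # xs) ! i) ((b # ys) ! g' i)"
    using R add.hyps(1) by (auto simp: g'_def nth_Cons split: nat.splits)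
  ultimately show ?case
    unfolding mle_def using M N by (intro exI[of _ "a # xs"] exI[of _ "b # ys"] exI[of _ g']) auto
qed

lemma mle_iff_mset_emb: "mle R M N \<longleftrightarrow> mset_emb R M N"
  using mset_emb_if_mle mle_if_mset_emb by blast

lemma mset_emb_add_mset_leftE:
  assumes "mset_emb R (add_mset a M) N"
  obtains b N' where "N = add_mset b N'" "R a b" "mset_emb R M N'"
  using assms
proof (induction "add_mset a M" N arbitrary: a M thesis rule: mset_emb.induct)
  case (add a' b' M' N)
  show ?case
  proof (cases "a' = a")
    case True
    with add show ?thesis by auto
  next
    case False
    then obtain M'' where M': "M' = add_mset a M''" and M: "M = add_mset a' M''"
      using add.hyps(4) by (metis add_eq_conv_ex)
    obtain b N' where "N = add_mset b N'" "R a b" "mset_emb R M'' N'"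
      using add.hyps(3)[OF M'] by blast
    with M add.hyps(1) show ?thesis
      by (intro add.prems[of b "add_mset b' N'"]) (auto simp: add_mset_commute intro: mset_emb.add)
  qed
qed simp

lemma mset_emb_member: "mset_emb R M N \<Longrightarrow> a \<in># M \<Longrightarrow> \<exists>b\<in>#N. R a b"
  by (induction rule: mset_emb.induct) auto

lemma mset_emb_refl: "\<forall>x\<in>#M. R x x \<Longrightarrow> mset_emb R M M"
  by (induction M) (auto intro: mset_emb.intros)

lemma mset_emb_mono:
  "mset_emb R M N \<Longrightarrow> \<forall>a\<in>#M. \<forall>b\<in>#N. R a b \<longrightarrow> S a b \<Longrightarrow> mset_emb S M N"
  by (induction rule: mset_emb.induct) (auto intro: mset_emb.intros)

lemma mset_emb_cong:
  "\<forall>a\<in>#M. \<forall>b\<in>#N. R a b \<longleftrightarrow> S a b \<Longrightarrow> mset_emb R M N \<longleftrightarrow> mset_emb S M N"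
  using mset_emb_mono by blast

lemma mset_emb_trans:
  "mset_emb R A B \<Longrightarrow> mset_emb S B C \<Longrightarrow> \<forall>a\<in>#A. \<forall>b\<in>#B. \<forall>c\<in>#C. R a b \<longrightarrow> S b c \<longrightarrow> T a c
   \<Longrightarrow> mset_emb T A C"
proof (induction arbitrary: C rule: mset_emb.induct)
  case (add a b M N)
  from add.prems(1) obtain c C' where "C = add_mset c C'" "S b c" "mset_emb S N C'"
    by (rule mset_emb_add_mset_leftE)
  with add show ?case
    by (auto intro!: mset_emb.add)
qed (rule mset_emb.empty)

lemma mset_emb_image_mset_iff:
  "mset_emb R (image_mset f M) (image_mset g N) \<longleftrightarrow> mset_emb (\<lambda>a b. R (f a) (g b)) M N"
proof
  show "mset_emb R (image_mset f M) (image_mset g N) \<Longrightarrow> mset_emb (\<lambda>a b. R (f a) (g b)) M N"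
  proof (induction M arbitrary: N)
    case (add a M)
    then obtain b N' where N: "image_mset g N = add_mset b N'" and "R (f a) b"
      and "mset_emb R (image_mset f M) N'"
      by (auto elim: mset_emb_add_mset_leftE)
    moreover obtain c N'' where "N = add_mset c N''" "b = g c" "N' = image_mset g N''"
      using N by (metis msed_map_invR)
    ultimately show ?case
      using add.IH by (auto intro: mset_emb.add)
  qed (simp add: mset_emb.empty)
next
  show "mset_emb (\<lambda>a b. R (f a) (g b)) M N \<Longrightarrow> mset_emb R (image_mset f M) (image_mset g N)"
    by (induction rule: mset_emb.induct) (auto intro: mset_emb.intros)
qed

lemma mset_emb_size_multiset_mono:
  "mset_emb R M N \<Longrightarrow> \<forall>a\<in>#M. \<forall>b\<in>#N. R a b \<longrightarrow> f a \<le> f b \<Longrightarrow> size_multiset f M \<le> size_multiset f N"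
  by (induction rule: mset_emb.induct) auto

lemma mset_emb_size_filter_mset_mono:
  "mset_emb R M N \<Longrightarrow> \<forall>a\<in>#M. \<forall>b\<in>#N. R a b \<longrightarrow> P a \<longrightarrow> P b
   \<Longrightarrow> size (filter_mset P M) \<le> size (filter_mset P N)"
  by (induction rule: mset_emb.induct) auto

lemma mset_emb_reflp_on: "reflp_on A R \<Longrightarrow> reflp_on {M. set_mset M \<subseteq> A} (mset_emb R)"
  by (auto simp: reflp_on_def intro: mset_emb_refl)

lemma mset_emb_transp_on: "transp_on A R \<Longrightarrow> transp_on {M. set_mset M \<subseteq> A} (mset_emb R)"
  by (rule transp_onI, erule mset_emb_trans) (auto dest: transp_onD)

lemma mset_emb_size_filter_mset_eq:
  assumes "mset_emb R M N" "mset_emb R N M"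
    and closed: "\<And>a b. a \<in># M + N \<Longrightarrow> b \<in># M + N \<Longrightarrow> R a b \<Longrightarrow> P a \<Longrightarrow> P b"
  shows "size (filter_mset P M) = size (filter_mset P N)"
proof (rule le_antisym)
  show "size (filter_mset P M) \<le> size (filter_mset P N)"
    by (rule mset_emb_size_filter_mset_mono[OF assms(1)]) (auto intro: closed)
  show "size (filter_mset P N) \<le> size (filter_mset P M)"
    by (rule mset_emb_size_filter_mset_mono[OF assms(2)]) (auto intro: closed)
qed

text \<open>Both the up-set of \<open>x\<close> and the up-set with \<open>x\<close> removed are preserved by the embeddings,
  so \<open>M\<close> and \<open>N\<close> have equally many elements in each; the difference is the multiplicity of \<open>x\<close>.\<close>

lemma mset_emb_antisym:
  assumes MN: "mset_emb R M N" and NM: "mset_emb R N M"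
    and trans: "transp_on (set_mset (M + N)) R" and antisym: "antisymp_on (set_mset (M + N)) R"
  shows "M = N"
proof (rule multiset_eqI)
  fix x
  show "count M x = count N x"
  proof (cases "x \<in># M + N")
    case False
    then show ?thesis
      by (simp add: not_in_iff)
  next
    case x: True
    define up where "up y \<longleftrightarrow> R x y \<or> y = x" for y
    define strict_up where "strict_up y \<longleftrightarrow> R x y \<and> y \<noteq> x" for y
    have "size (filter_mset up M) = size (filter_mset up N)"
    proof (rule mset_emb_size_filter_mset_eq[OF MN NM])
      fix a b assume "a \<in># M + N" "b \<in># M + N" "R a b" "up a"
      then show "up b"
        using transp_onD[OF trans x] unfolding up_def by blast
    qed
    moreover have "size (filter_mset strict_up M) = size (filter_mset strict_up N)"
    proof (rule mset_emb_size_filter_mset_eq[OF MN NM])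
      fix a b assume "a \<in># M + N" "b \<in># M + N" "R a b" "strict_up a"
      then show "strict_up b"
        using transp_onD[OF trans x] antisymp_onD[OF antisym, of a x] x unfolding strict_up_def by blast
    qed
    moreover have "size (filter_mset up K) = size (filter_mset strict_up K) + count K x" for K
    proof -
      have "filter_mset up K = filter_mset strict_up K + {#y \<in># K. y = x#}"
        by (rule multiset_eqI) (auto simp: up_def strict_up_def)
      then show ?thesis
        by (simp add: filter_eq_replicate_mset)
    qed
    ultimately show ?thesis
      by simp
  qed
qed

lemma mset_emb_antisymp_on:
  assumes "transp_on A R" "antisymp_on A R"
  shows "antisymp_on {M. set_mset M \<subseteq> A} (mset_emb R)"
proof (rule antisymp_onI)
  fix M N assume "M \<in> {M. set_mset M \<subseteq> A}" "N \<in> {M. set_mset M \<subseteq> A}"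
    and "mset_emb R M N" "mset_emb R N M"
  moreover from \<open>M \<in> _\<close> \<open>N \<in> _\<close> have "set_mset (M + N) \<subseteq> A"
    by simp
  ultimately show "M = N"
    using mset_emb_antisym transp_on_subset[OF assms(1)] antisymp_on_subset[OF assms(2)] by blast
qed

lemma car_MO: "car (MO X) = {M. set_mset M \<subseteq> car X}"
  by (simp add: MO_def car_def)

lemma leq_MO: "leq (MO X) = mset_emb (leq X)"
  by (simp add: MO_def leq_def fun_eq_iff mle_iff_mset_emb)

lemma is_po_MO: "is_po X \<Longrightarrow> is_po (MO X)"
  unfolding is_po_iff car_MO leq_MO
  by (blast intro: mset_emb_reflp_on mset_emb_transp_on mset_emb_antisymp_on)

section \<open>The tree order\<close>

text \<open>Leaves get label \<open>0\<close>, so that \<open>tle_Star_iff\<close> treats leaves and stars alike and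
  \<open>T\<^sup>-\<^sub>n(X)\<close> is the set of trees of label \<open>0\<close> (\<open>car_TmO\<close>).\<close>

primrec label :: "'a ktree \<Rightarrow> nat" where
  "label (Bar x) = 0"
| "label (Star i \<sigma>) = i"

lemma label_map_ktree [simp]: "label (map_ktree f t) = label t"
  by (cases t) simp_all

lemma size_ktree_Star_member: "t \<in># \<sigma> \<Longrightarrow> size t < size (Star i \<sigma>)"
  by (auto dest!: multi_member_split)

lemma tcar_Bar [simp]: "Bar x \<in> tcar n A \<longleftrightarrow> x \<in> A"
  by (auto elim: tcar.cases intro: tcar.intros)

lemma tcar_Star [simp]: "Star i \<sigma> \<in> tcar n A \<longleftrightarrow> i < n \<and> (\<forall>t\<in>#\<sigma>. t \<in> tcar n A)"
  by (auto elim: tcar.cases intro: tcar.intros)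

lemma set_ktree_tcar: "t \<in> tcar n A \<Longrightarrow> set_ktree t \<subseteq> A"
  by (induction rule: tcar.induct) auto

lemma map_ktree_tcar: "t \<in> tcar n A \<Longrightarrow> f ` set_ktree t \<subseteq> B \<Longrightarrow> map_ktree f t \<in> tcar n B"
  by (induction rule: tcar.induct) auto

lemma tle_Bar_Bar [simp]: "tle le (Bar x) (Bar y) \<longleftrightarrow> le x y"
  by (auto elim: tle.cases intro: tle.intros)

lemma tle_Star_Bar [simp]: "\<not> tle le (Star i \<sigma>) (Bar y)"
  by (auto elim: tle.cases)

lemma tle_Star_iff:
  "tle le s (Star j \<tau>) \<longleftrightarrow>
     (\<exists>\<sigma>. s = Star j \<sigma> \<and> mset_emb (tle le) \<sigma> \<tau>) \<or> (label s \<le> j \<and> (\<exists>t\<in>#\<tau>. tle le s t))"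
  by (cases s) (auto elim: tle.cases intro: tle.intros simp: mle_iff_mset_emb)

lemma tle_Star_if_child: "t \<in># \<tau> \<Longrightarrow> tle le s t \<Longrightarrow> label s \<le> j \<Longrightarrow> tle le s (Star j \<tau>)"
  unfolding tle_Star_iff by blast

lemma tle_label_mono: "tle le s t \<Longrightarrow> label s \<le> label t"
  by (induction rule: tle.induct) auto

lemma tle_size: "tle le s t \<Longrightarrow> size s \<le> size t"
proof (induction rule: tle.induct)
  case (bar_star t ts x j)
  then show ?case
    using size_ktree_Star_member[OF bar_star(1), of j] by simp
next
  case (star_star \<sigma> \<tau> i)
  then have "size_multiset size \<sigma> \<le> size_multiset size \<tau>"
    by (intro mset_emb_size_multiset_mono[of "\<lambda>s t. tle le s t \<and> size s \<le> size t"])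
      (simp_all add: mle_iff_mset_emb)
  then show ?case
    by simp
next
  case (star_below i j t ts \<sigma>)
  then show ?case
    using size_ktree_Star_member[OF star_below(2), of j] by simp
qed simp

lemma tle_reflp_on: "reflp_on A le \<Longrightarrow> reflp_on {t. set_ktree t \<subseteq> A} (tle le)"
proof (rule reflp_onI)
  fix t assume "reflp_on A le" "t \<in> {t. set_ktree t \<subseteq> A}"
  then show "tle le t t"
  proof (induction t)
    case (Bar x)
    then show ?case
      by (simp add: reflp_onD)
  next
    case (Star i \<sigma>)
    then have "mset_emb (tle le) \<sigma> \<sigma>"
      by (intro mset_emb_refl) auto
    then show ?case
      by (simp add: tle_Star_iff)
  qed
qed

lemma tle_tle_StarE:
  assumes "tle le r s" "tle le s (Star k \<tau>)"
  obtains (emb) \<sigma> \<rho> where "r = Star k \<sigma>" "s = Star k \<rho>"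
      "mset_emb (tle le) \<sigma> \<rho>" "mset_emb (tle le) \<rho> \<tau>"
  | (child) q t where "label r \<le> k" "t \<in># \<tau>" "tle le r q" "tle le q t" "set_ktree q \<subseteq> set_ktree s"
proof -
  from assms(2) consider
      (emb) \<rho> where "s = Star k \<rho>" "mset_emb (tle le) \<rho> \<tau>"
    | (child) t where "label s \<le> k" "t \<in># \<tau>" "tle le s t"
    unfolding tle_Star_iff by blast
  then show ?thesis
  proof cases
    case emb
    from assms(1) consider
        (emb') \<sigma> where "r = Star k \<sigma>" "mset_emb (tle le) \<sigma> \<rho>"
      | (child') q where "label r \<le> k" "q \<in># \<rho>" "tle le r q"
      unfolding emb(1) tle_Star_iff by blast
    then show ?thesis
    proof cases
      case child'
      moreover obtain t where "t \<in># \<tau>" "tle le q t"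
        using mset_emb_member[OF emb(2) child'(2)] by blast
      ultimately show ?thesis
        using that(2) emb(1) by auto
    qed (use that(1) emb in blast)
  next
    case child
    then show ?thesis
      using that(2) tle_label_mono[OF assms(1)] assms(1) by force
  qed
qed

lemma tle_trans:
  assumes trans: "transp_on A le"
  shows "set_ktree t \<subseteq> A \<Longrightarrow> set_ktree r \<subseteq> A \<Longrightarrow> set_ktree s \<subseteq> A \<Longrightarrow>
    tle le r s \<Longrightarrow> tle le s t \<Longrightarrow> tle le r t"
proof (induction t arbitrary: r s)
  case (Bar z)
  obtain y where s: "s = Bar y"
    using Bar.prems(5) by (cases s) auto
  obtain x where r: "r = Bar x"
    using Bar.prems(4) s by (cases r) auto
  show ?case
    using Bar.prems transp_onD[OF trans, of x y z] unfolding r s by simp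
next
  case (Star k \<tau>)
  have IH: "tle le r' t" if "t \<in># \<tau>" "set_ktree r' \<subseteq> A" "set_ktree s' \<subseteq> A"
    "tle le r' s'" "tle le s' t" for t r' s'
    using Star.IH[OF that(1) _ that(2,3,4,5)] that(1) Star.prems(1) by force
  from Star.prems(4,5) show ?case
  proof (cases rule: tle_tle_StarE)
    case (emb \<sigma> \<rho>)
    have "mset_emb (tle le) \<sigma> \<tau>"
    proof (rule mset_emb_trans[OF emb(3,4)], intro ballI impI)
      fix a b c assume "a \<in># \<sigma>" "b \<in># \<rho>" "c \<in># \<tau>" "tle le a b" "tle le b c"
      with Star.prems(2,3) show "tle le a c"
        unfolding emb(1,2) by (intro IH[of c a b]) auto
    qed
    then show ?thesis
      using emb(1) by (simp add: tle_Star_iff)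
  next
    case (child q t)
    then have "tle le r t"
      using IH[of t r q] Star.prems(2,3) by auto
    with child(1,2) show ?thesis
      by (intro tle_Star_if_child)
  qed
qed

lemma tle_transp_on: "transp_on A le \<Longrightarrow> transp_on {t. set_ktree t \<subseteq> A} (tle le)"
  by (rule transp_onI) (use tle_trans in blast)

lemma tle_Star_Star_size_eq:
  assumes "tle le (Star i \<sigma>) (Star j \<tau>)" "size (Star i \<sigma>) = size (Star j \<tau>)"
  shows "i = j" "mset_emb (tle le) \<sigma> \<tau>"
proof -
  have "\<not> tle le (Star i \<sigma>) u" if "u \<in># \<tau>" for u
    using tle_size[of le "Star i \<sigma>" u] size_ktree_Star_member[OF that, of j] assms(2) by auto
  with assms(1) show "i = j" "mset_emb (tle le) \<sigma> \<tau>"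
    unfolding tle_Star_iff by auto
qed

lemma tle_antisymp_on:
  assumes trans: "transp_on A le" and antisym: "antisymp_on A le"
  shows "antisymp_on {t. set_ktree t \<subseteq> A} (tle le)"
proof (rule antisymp_onI)
  fix s t assume "s \<in> {t. set_ktree t \<subseteq> A}" "t \<in> {t. set_ktree t \<subseteq> A}" "tle le s t" "tle le t s"
  then show "s = t"
  proof (induction "size s" arbitrary: s t rule: less_induct)
    case less
    show ?case
    proof (cases s)
      case (Bar x)
      then obtain y where "t = Bar y"
        using less.prems(4) by (cases t) auto
      with Bar less.prems show ?thesis
        using antisymp_onD[OF antisym, of x y] by simp
    next
      case (Star i \<sigma>)
      then obtain j \<tau> where t: "t = Star j \<tau>"
        using less.prems(3) by (cases t) auto
      have size_eq: "size s = size t"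
        using tle_size[OF less.prems(3)] tle_size[OF less.prems(4)] by simp
      then have "i = j" "mset_emb (tle le) \<sigma> \<tau>" "mset_emb (tle le) \<tau> \<sigma>"
        using tle_Star_Star_size_eq less.prems(3,4) unfolding Star t by metis+
      moreover have sub: "set_mset (\<sigma> + \<tau>) \<subseteq> {t. set_ktree t \<subseteq> A}"
        using less.prems(1,2) unfolding Star t by auto
      then have "transp_on (set_mset (\<sigma> + \<tau>)) (tle le)"
        by (rule transp_on_subset[OF tle_transp_on[OF trans]])
      moreover have "antisymp_on (set_mset (\<sigma> + \<tau>)) (tle le)"
      proof (rule antisymp_onI)
        fix u v assume u: "u \<in> set_mset (\<sigma> + \<tau>)" and v: "v \<in> set_mset (\<sigma> + \<tau>)"
          and "tle le u v" "tle le v u"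
        moreover have "size u < size s"
          using u size_ktree_Star_member size_eq unfolding Star t by fastforce
        ultimately show "u = v"
          using less.hyps sub by blast
      qed
      ultimately show ?thesis
        unfolding Star t by (simp add: mset_emb_antisym)
    qed
  qed
qed

lemma car_TO: "car (TO n X) = tcar n (car X)"
  by (simp add: TO_def car_def)

lemma leq_TO: "leq (TO n X) = tle (leq X)"
  by (simp add: TO_def leq_def)

lemma is_po_TO: "is_po X \<Longrightarrow> is_po (TO n X)"
proof -
  have sub: "tcar n (car X) \<subseteq> {t. set_ktree t \<subseteq> car X}"
    by (auto dest: set_ktree_tcar)
  assume "is_po X"
  then show ?thesis
    unfolding is_po_iff car_TO leq_TO
    by (meson sub tle_reflp_on tle_transp_on tle_antisymp_on
        reflp_on_subset transp_on_subset antisymp_on_subset)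
qed

lemma tle_map_ktree_iff:
  "tle le (map_ktree f s) (map_ktree f t) \<longleftrightarrow> tle (\<lambda>x y. le (f x) (f y)) s t"
proof (induction t arbitrary: s)
  case (Bar y)
  then show ?case
    by (cases s) simp_all
next
  case (Star j \<tau>)
  let ?le' = "\<lambda>x y. le (f x) (f y)"
  have emb: "mset_emb (tle le) (image_mset (map_ktree f) \<sigma>) (image_mset (map_ktree f) \<tau>) \<longleftrightarrow>
      mset_emb (tle ?le') \<sigma> \<tau>" for \<sigma>
    unfolding mset_emb_image_mset_iff using Star.IH by (intro mset_emb_cong) simp
  have "(\<exists>\<sigma>'. map_ktree f s = Star j \<sigma>' \<and> mset_emb (tle le) \<sigma>' (image_mset (map_ktree f) \<tau>)) \<longleftrightarrow>
      (\<exists>\<sigma>. s = Star j \<sigma> \<and> mset_emb (tle ?le') \<sigma> \<tau>)"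
    by (cases s) (auto simp: emb)
  moreover have "(\<exists>t\<in>#image_mset (map_ktree f) \<tau>. tle le (map_ktree f s) t) \<longleftrightarrow>
      (\<exists>t\<in>#\<tau>. tle ?le' s t)"
    using Star.IH by auto
  ultimately show ?case
    unfolding ktree.map tle_Star_iff label_map_ktree by blast
qed

lemma tle_mono_on:
  "tle le s t \<Longrightarrow> \<forall>x\<in>set_ktree s. \<forall>y\<in>set_ktree t. le x y \<longrightarrow> le' x y \<Longrightarrow> tle le' s t"
proof (induction rule: tle.induct)
  case (star_star \<sigma> \<tau> i)
  then have "mset_emb (tle le') \<sigma> \<tau>"
    by (auto simp: mle_iff_mset_emb elim!: mset_emb_mono)
  then show ?case
    by (simp add: tle_Star_iff)
qed (auto intro: tle.intros)

lemma tle_fin_le: "tle le s t \<Longrightarrow> fin_le le (set_ktree s) (set_ktree t)"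
proof (induction rule: tle.induct)
  case (star_star \<sigma> \<tau> i)
  show ?case
    unfolding fin_le_def
  proof
    fix x assume "x \<in> set_ktree (Star i \<sigma>)"
    then obtain s where s: "s \<in># \<sigma>" "x \<in> set_ktree s"
      by auto
    obtain t where t: "t \<in># \<tau>" "fin_le le (set_ktree s) (set_ktree t)"
      using star_star mset_emb_member[OF _ s(1)] by (auto simp: mle_iff_mset_emb)
    then obtain y where "y \<in> set_ktree t" "le x y"
      using s(2) unfolding fin_le_def by blast
    with t(1) show "\<exists>y\<in>set_ktree (Star i \<tau>). le x y"
      by auto
  qed
next
  case (bar_star t ts x j)
  have "set_ktree t \<subseteq> set_ktree (Star j ts)"
    using bar_star.hyps(1) by auto
  with bar_star.IH show ?case
    unfolding fin_le_def by blast
next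
  case (star_below i j t ts \<sigma>)
  have "set_ktree t \<subseteq> set_ktree (Star j ts)"
    using star_below.hyps(2) by auto
  with star_below.IH show ?case
    unfolding fin_le_def by blast
qed (simp add: fin_le_def)

section \<open>The dilators \<open>M \<circ> T\<^sub>n\<close> and \<open>T\<^sup>-\<^sub>n\<close>\<close>

lemma qemb_MM:
  assumes "qemb f X Y"
  shows "qemb (MM f) (MO X) (MO Y)"
  unfolding qemb_def car_MO leq_MO MM_def
proof (intro conjI ballI)
  fix \<sigma> assume "\<sigma> \<in> {\<sigma>. set_mset \<sigma> \<subseteq> car X}"
  then show "image_mset f \<sigma> \<in> {\<sigma>. set_mset \<sigma> \<subseteq> car Y}"
    using assms unfolding qemb_def by auto
next
  fix \<sigma> \<tau> assume "\<sigma> \<in> {\<sigma>. set_mset \<sigma> \<subseteq> car X}" "\<tau> \<in> {\<sigma>. set_mset \<sigma> \<subseteq> car X}"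
  then have "\<forall>a\<in>#\<sigma>. \<forall>b\<in>#\<tau>. leq Y (f a) (f b) \<longrightarrow> leq X a b"
    using assms unfolding qemb_def by blast
  then show "mset_emb (leq Y) (image_mset f \<sigma>) (image_mset f \<tau>) \<longrightarrow> mset_emb (leq X) \<sigma> \<tau>"
    unfolding mset_emb_image_mset_iff by (auto elim: mset_emb_mono)
qed

lemma emb_MM:
  assumes "emb f X Y"
  shows "emb (MM f) (MO X) (MO Y)"
  unfolding emb_def
proof (intro conjI ballI impI)
  show "qemb (MM f) (MO X) (MO Y)"
    using assms unfolding emb_def by (simp add: qemb_MM)
next
  fix \<sigma> \<tau> assume "\<sigma> \<in> car (MO X)" "\<tau> \<in> car (MO X)" and le: "leq (MO X) \<sigma> \<tau>"
  then have "\<forall>a\<in>#\<sigma>. \<forall>b\<in>#\<tau>. leq X a b \<longrightarrow> leq Y (f a) (f b)"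
    using assms unfolding emb_def car_MO by blast
  with le[unfolded leq_MO] show "leq (MO Y) (MM f \<sigma>) (MM f \<tau>)"
    unfolding leq_MO MM_def mset_emb_image_mset_iff by (rule mset_emb_mono)
qed

lemma MM_image_car_MO:
  assumes "\<forall>x\<in>car X. f x \<in> car Y"
  shows "MM f ` car (MO X) = {\<sigma> \<in> car (MO Y). set_mset \<sigma> \<subseteq> f ` car X}"
proof
  show "MM f ` car (MO X) \<subseteq> {\<sigma> \<in> car (MO Y). set_mset \<sigma> \<subseteq> f ` car X}"
    using assms by (force simp: MM_def car_MO)
next
  show "{\<sigma> \<in> car (MO Y). set_mset \<sigma> \<subseteq> f ` car X} \<subseteq> MM f ` car (MO X)"
  proof safe
    fix \<sigma> assume "set_mset \<sigma> \<subseteq> f ` car X"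
    then have "MM f (image_mset (inv_into (car X) f) \<sigma>) = \<sigma>"
      unfolding MM_def image_mset.compositionality
      by (intro multiset.map_ident_strong) (auto simp: f_inv_into_f)
    moreover have "image_mset (inv_into (car X) f) \<sigma> \<in> car (MO X)"
      using \<open>set_mset \<sigma> \<subseteq> f ` car X\<close> by (auto simp: car_MO inv_into_into)
    ultimately show "\<sigma> \<in> MM f ` car (MO X)"
      by (metis image_eqI)
  qed
qed

lemma qemb_map_ktree_TO:
  assumes "qemb f X Y"
  shows "qemb (map_ktree f) (TO n X) (TO n Y)"
  unfolding qemb_def car_TO leq_TO
proof (intro conjI ballI impI)
  fix t assume "t \<in> tcar n (car X)"
  moreover have "f ` set_ktree t \<subseteq> car Y"
    using assms set_ktree_tcar[OF calculation] unfolding qemb_def by blast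
  ultimately show "map_ktree f t \<in> tcar n (car Y)"
    by (rule map_ktree_tcar)
next
  fix s t assume "s \<in> tcar n (car X)" "t \<in> tcar n (car X)"
    and le: "tle (leq Y) (map_ktree f s) (map_ktree f t)"
  then have "\<forall>x\<in>set_ktree s. \<forall>y\<in>set_ktree t. leq Y (f x) (f y) \<longrightarrow> leq X x y"
    using assms set_ktree_tcar unfolding qemb_def by blast
  with le[unfolded tle_map_ktree_iff] show "tle (leq X) s t"
    by (rule tle_mono_on)
qed

lemma emb_map_ktree_TO:
  assumes "emb f X Y"
  shows "emb (map_ktree f) (TO n X) (TO n Y)"
  unfolding emb_def
proof (intro conjI ballI impI)
  show "qemb (map_ktree f) (TO n X) (TO n Y)"
    using assms unfolding emb_def by (simp add: qemb_map_ktree_TO)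
next
  fix s t assume "s \<in> car (TO n X)" "t \<in> car (TO n X)" and le: "leq (TO n X) s t"
  then have "\<forall>x\<in>set_ktree s. \<forall>y\<in>set_ktree t. leq X x y \<longrightarrow> leq Y (f x) (f y)"
    using assms set_ktree_tcar unfolding emb_def car_TO by blast
  with le[unfolded leq_TO] show "leq (TO n Y) (map_ktree f s) (map_ktree f t)"
    unfolding leq_TO tle_map_ktree_iff by (rule tle_mono_on)
qed

lemma map_ktree_image_tcar:
  assumes "f ` A \<subseteq> B"
  shows "map_ktree f ` tcar n A = {t \<in> tcar n B. set_ktree t \<subseteq> f ` A}"
proof
  show "map_ktree f ` tcar n A \<subseteq> {t \<in> tcar n B. set_ktree t \<subseteq> f ` A}"
  proof safe
    fix t assume "t \<in> tcar n A"
    moreover have "f ` set_ktree t \<subseteq> B"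
      using assms set_ktree_tcar[OF calculation] by blast
    ultimately show "map_ktree f t \<in> tcar n B"
      by (rule map_ktree_tcar)
    show "x \<in> set_ktree (map_ktree f t) \<Longrightarrow> x \<in> f ` A" for x
      using set_ktree_tcar[OF \<open>t \<in> tcar n A\<close>] by (auto simp: ktree.set_map)
  qed
next
  show "{t \<in> tcar n B. set_ktree t \<subseteq> f ` A} \<subseteq> map_ktree f ` tcar n A"
  proof safe
    fix t assume t: "t \<in> tcar n B" "set_ktree t \<subseteq> f ` A"
    then have "map_ktree f (map_ktree (inv_into A f) t) = t"
      unfolding ktree.map_comp by (intro ktree.map_ident_strong) (auto simp: f_inv_into_f)
    moreover have "inv_into A f ` set_ktree t \<subseteq> A"
      using t(2) by (blast intro: inv_into_into)
    then have "map_ktree (inv_into A f) t \<in> tcar n A"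
      by (rule map_ktree_tcar[OF t(1)])
    ultimately show "t \<in> map_ktree f ` tcar n A"
      by (metis image_eqI)
  qed
qed

lemma WO_eq: "WO n X = MO (TO n X)"
  by (simp add: WO_def comp_obj_def)

lemma car_WO: "car (WO n X) = {\<sigma>. set_mset \<sigma> \<subseteq> tcar n (car X)}"
  by (simp add: WO_eq car_MO car_TO)

lemma leq_WO: "leq (WO n X) = mset_emb (tle (leq X))"
  by (simp add: WO_eq leq_MO leq_TO)

lemma WS_eq: "WS n X \<sigma> = \<Union> (set_ktree ` set_mset \<sigma>)"
  by (auto simp: WS_def comp_supp_def MS_def TS_def)

lemma WM_eq: "WM f = MM (map_ktree f)"
  by (simp add: WM_def fun_eq_iff)

lemma WM_image_car_WO:
  assumes qemb: "qemb f X Y"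
  shows "WM f ` car (WO n X) = {\<sigma> \<in> car (WO n Y). WS n Y \<sigma> \<subseteq> f ` car X}"
proof -
  have "\<forall>t\<in>car (TO n X). map_ktree f t \<in> car (TO n Y)"
    using qemb_map_ktree_TO[OF qemb] unfolding qemb_def by blast
  then have "WM f ` car (WO n X) = {\<sigma> \<in> car (MO (TO n Y)). set_mset \<sigma> \<subseteq> map_ktree f ` car (TO n X)}"
    unfolding WO_eq WM_eq by (rule MM_image_car_MO)
  moreover have "f ` car X \<subseteq> car Y"
    using qemb unfolding qemb_def by blast
  then have "map_ktree f ` car (TO n X) = {t \<in> tcar n (car Y). set_ktree t \<subseteq> f ` car X}"
    unfolding car_TO by (rule map_ktree_image_tcar)
  ultimately show ?thesis
    by (auto simp: car_MO car_TO car_WO WS_eq)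
qed

lemma po_dilator_WO:
  "po_dilator (WO n :: 'a po \<Rightarrow> _) (WS n) (WO n :: 'b po \<Rightarrow> _) (WS n)
     (WM :: ('a \<Rightarrow> 'a) \<Rightarrow> _) (WM :: ('a \<Rightarrow> 'b) \<Rightarrow> _) (WM :: ('b \<Rightarrow> 'c) \<Rightarrow> _) (WM :: ('a \<Rightarrow> 'c) \<Rightarrow> _)"
  unfolding po_dilator_def
proof (intro conjI allI impI ballI)
  fix X :: "'a po" and \<sigma> assume "is_po X"
  then show "is_po (WO n X)"
    by (simp add: WO_eq is_po_MO is_po_TO)
  assume "\<sigma> \<in> car (WO n X)"
  then show "finite (WS n X \<sigma>)" "WS n X \<sigma> \<subseteq> car X"
    by (auto simp: WS_eq car_WO dest: set_ktree_tcar)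
next
  fix X :: "'a po" and f \<sigma> assume "is_po X \<and> (\<forall>x\<in>car X. f x = x)" "\<sigma> \<in> car (WO n X)"
  then show "WM f \<sigma> = \<sigma>"
    unfolding WM_eq MM_def car_WO
    by (auto intro!: multiset.map_ident_strong ktree.map_ident_strong dest: set_ktree_tcar)
next
  fix X :: "'a po" and Y :: "'b po" and f g \<sigma>
  assume "is_po X \<and> is_po Y \<and> qemb f X Y \<and> (\<forall>x\<in>car X. f x = g x)" "\<sigma> \<in> car (WO n X)"
  then show "WM f \<sigma> = WM g \<sigma>"
    unfolding WM_eq MM_def car_WO
    by (auto intro!: multiset.map_cong0 ktree.map_cong0 dest: set_ktree_tcar)
next
  fix f :: "'a \<Rightarrow> 'b" and g :: "'b \<Rightarrow> 'c" and \<sigma>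
  show "WM (g \<circ> f) \<sigma> = WM g (WM f \<sigma>)"
    by (simp add: WM_eq MM_def multiset.map_comp comp_def ktree.map_comp)
next
  fix X :: "'a po" and Y :: "'b po" and f \<sigma>
  assume "is_po X \<and> is_po Y \<and> qemb f X Y"
  then have qemb: "qemb f X Y"
    by blast
  then show "qemb (WM f) (WO n X) (WO n Y)"
    by (simp add: WO_eq WM_eq qemb_MM qemb_map_ktree_TO)
  show "WS n Y (WM f \<sigma>) = f ` WS n X \<sigma>"
    by (auto simp: WS_eq WM_eq MM_def ktree.set_map)
  assume "emb f X Y"
  then show "emb (WM f) (WO n X) (WO n Y)"
    by (simp add: WO_eq WM_eq emb_MM emb_map_ktree_TO)
  show "WM f ` car (WO n X) = {\<sigma> \<in> car (WO n Y). WS n Y \<sigma> \<subseteq> f ` car X}"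
    using qemb by (rule WM_image_car_WO)
qed

lemma normal_WO: "normal (WO n) (WS n)"
  unfolding normal_def
proof (intro allI impI ballI)
  fix X :: "'a po" and \<sigma> \<tau>
  assume "leq (WO n X) \<sigma> \<tau>"
  then have emb: "mset_emb (tle (leq X)) \<sigma> \<tau>"
    by (simp add: leq_WO)
  show "fin_le (leq X) (WS n X \<sigma>) (WS n X \<tau>)"
    unfolding fin_le_def WS_eq
  proof
    fix x assume "x \<in> \<Union> (set_ktree ` set_mset \<sigma>)"
    then obtain s where s: "s \<in># \<sigma>" "x \<in> set_ktree s"
      by blast
    obtain t where t: "t \<in># \<tau>" "tle (leq X) s t"
      using mset_emb_member[OF emb s(1)] by blast
    then obtain y where "y \<in> set_ktree t" "leq X x y"
      using tle_fin_le[OF t(2)] s(2) unfolding fin_le_def by blast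
    with t(1) show "\<exists>y\<in>\<Union> (set_ktree ` set_mset \<tau>). leq X x y"
      by blast
  qed
qed

lemma car_TmO: "car (TmO n X) = {t \<in> tcar n (car X). label t = 0}"
proof -
  have "t \<in> {Bar x | x. x \<in> car X} \<union> {Star 0 \<sigma> | \<sigma>. Star 0 \<sigma> \<in> tcar n (car X)} \<longleftrightarrow>
      t \<in> tcar n (car X) \<and> label t = 0" for t
    by (cases t) auto
  then show ?thesis
    by (auto simp: TmO_def car_def)
qed

lemma leq_TmO: "leq (TmO n X) = tle (leq X)"
  by (simp add: TmO_def leq_def)

lemma TmO_eq: "TmO n X = ({t \<in> car (TO n X). label t = 0}, leq (TO n X))"
  by (metis car_TmO leq_TmO car_TO leq_TO car_def leq_def prod.collapse)

lemma is_po_TmO: "is_po X \<Longrightarrow> is_po (TmO n X)"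
  unfolding TmO_eq by (intro is_po_restrict is_po_TO) auto

lemma qemb_restrict: "qemb f X Y \<Longrightarrow> A \<subseteq> car X \<Longrightarrow> f ` A \<subseteq> B \<Longrightarrow> qemb f (A, leq X) (B, leq Y)"
  unfolding qemb_def by (auto simp: car_def leq_def subset_iff)

lemma emb_restrict: "emb f X Y \<Longrightarrow> A \<subseteq> car X \<Longrightarrow> f ` A \<subseteq> B \<Longrightarrow> emb f (A, leq X) (B, leq Y)"
  unfolding emb_def qemb_def by (auto simp: car_def leq_def subset_iff)

lemma map_ktree_image_car_TmO:
  assumes "qemb f X Y"
  shows "map_ktree f ` car (TmO n X) = {t \<in> car (TmO n Y). TmS Y t \<subseteq> f ` car X}"
proof -
  have "f ` car X \<subseteq> car Y"
    using assms unfolding qemb_def by blast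
  then have "map_ktree f ` tcar n (car X) = {t \<in> tcar n (car Y). set_ktree t \<subseteq> f ` car X}"
    by (rule map_ktree_image_tcar)
  moreover have "map_ktree f ` {t \<in> tcar n (car X). label t = 0} =
      {u \<in> map_ktree f ` tcar n (car X). label u = 0}"
    by force
  ultimately show ?thesis
    unfolding car_TmO TmS_def by auto
qed

lemma po_dilator_TmO:
  "po_dilator (TmO n :: 'a po \<Rightarrow> _) TmS (TmO n :: 'b po \<Rightarrow> _) TmS
     (map_ktree :: ('a \<Rightarrow> 'a) \<Rightarrow> _) (map_ktree :: ('a \<Rightarrow> 'b) \<Rightarrow> _)
     (map_ktree :: ('b \<Rightarrow> 'c) \<Rightarrow> _) (map_ktree :: ('a \<Rightarrow> 'c) \<Rightarrow> _)"
  unfolding po_dilator_def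
proof (intro conjI allI impI ballI)
  fix X :: "'a po" and t assume "is_po X"
  then show "is_po (TmO n X)"
    by (rule is_po_TmO)
  assume "t \<in> car (TmO n X)"
  then show "finite (TmS X t)" "TmS X t \<subseteq> car X"
    by (auto simp: TmS_def car_TmO dest: set_ktree_tcar)
next
  fix X :: "'a po" and f t assume "is_po X \<and> (\<forall>x\<in>car X. f x = x)" "t \<in> car (TmO n X)"
  then show "map_ktree f t = t"
    unfolding car_TmO by (auto intro!: ktree.map_ident_strong dest: set_ktree_tcar)
next
  fix X :: "'a po" and Y :: "'b po" and f g t
  assume "is_po X \<and> is_po Y \<and> qemb f X Y \<and> (\<forall>x\<in>car X. f x = g x)" "t \<in> car (TmO n X)"
  then show "map_ktree f t = map_ktree g t"
    unfolding car_TmO by (auto intro!: ktree.map_cong0 dest: set_ktree_tcar)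
next
  fix f :: "'a \<Rightarrow> 'b" and g :: "'b \<Rightarrow> 'c" and t
  show "map_ktree (g \<circ> f) t = map_ktree g (map_ktree f t)"
    by (simp add: ktree.map_comp)
next
  fix X :: "'a po" and Y :: "'b po" and f t
  assume "is_po X \<and> is_po Y \<and> qemb f X Y"
  then have qemb: "qemb f X Y"
    by blast
  have "map_ktree f ` car (TO n X) \<subseteq> car (TO n Y)"
    using qemb_map_ktree_TO[OF qemb] unfolding qemb_def by blast
  then have maps: "map_ktree f ` {t \<in> car (TO n X). label t = 0} \<subseteq> {t \<in> car (TO n Y). label t = 0}"
    by auto
  show "qemb (map_ktree f) (TmO n X) (TmO n Y)"
    unfolding TmO_eq by (rule qemb_restrict[OF qemb_map_ktree_TO[OF qemb] _ maps]) blast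
  show "TmS Y (map_ktree f t) = f ` TmS X t"
    by (simp add: TmS_def ktree.set_map)
  assume "emb f X Y"
  then show "emb (map_ktree f) (TmO n X) (TmO n Y)"
    unfolding TmO_eq by (rule emb_restrict[OF emb_map_ktree_TO _ maps]) blast
  show "map_ktree f ` car (TmO n X) = {t \<in> car (TmO n Y). TmS Y t \<subseteq> f ` car X}"
    using qemb by (rule map_ktree_image_car_TmO)
qed

lemma normal_TmO: "normal (TmO n) TmS"
  unfolding normal_def leq_TmO TmS_def by (blast intro: tle_fin_le)

section \<open>The isomorphism \<open>\<pi>\<close> and the fixed point property\<close>

primrec pi_inv :: "'a ktree \<Rightarrow> 'a ktree ktree" where
  "pi_inv (Bar x) = Bar (Bar x)"
| "pi_inv (Star i \<sigma>) = (case i of 0 \<Rightarrow> Bar (Star 0 \<sigma>) | Suc j \<Rightarrow> Star j (image_mset pi_inv \<sigma>))"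

lemma pi_pi_inv [simp]: "pi (pi_inv t) = t"
proof (induction t)
  case (Star i \<sigma>)
  then show ?case
    by (cases i) (simp_all add: multiset.map_comp multiset.map_ident_strong)
qed simp

lemma pi_inv_pi: "\<forall>u\<in>set_ktree s. label u = 0 \<Longrightarrow> pi_inv (pi s) = s"
proof (induction s)
  case (Bar u)
  then show ?case
    by (cases u) simp_all
next
  case (Star i \<sigma>)
  then show ?case
    by (simp add: multiset.map_comp multiset.map_ident_strong)
qed

lemma label_set_ktree_pi_inv: "u \<in> set_ktree (pi_inv t) \<Longrightarrow> label u = 0"
proof (induction t)
  case (Star i \<sigma>)
  then show ?case
    by (cases i) auto
qed simp

lemma size_set_ktree_pi_inv: "u \<in> set_ktree (pi_inv t) \<Longrightarrow> size u \<le> size t"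
proof (induction t)
  case (Star i \<sigma>)
  show ?case
  proof (cases i)
    case (Suc j)
    with Star.prems obtain t where t: "t \<in># \<sigma>" "u \<in> set_ktree (pi_inv t)"
      by auto
    with Star.IH have "size u \<le> size t"
      by blast
    with size_ktree_Star_member[OF t(1), of i] show ?thesis
      by simp
  qed (use Star.prems in simp)
qed simp

lemma pi_inv_tcar: "t \<in> tcar (Suc n) A \<Longrightarrow> pi_inv t \<in> tcar n {u \<in> tcar (Suc n) A. label u = 0}"
proof (induction rule: tcar.induct)
  case (star i \<sigma>)
  then show ?case
    by (cases i) auto
qed simp

lemma pi_tcar: "s \<in> tcar n {u \<in> tcar (Suc n) A. label u = 0} \<Longrightarrow> pi s \<in> tcar (Suc n) A"
  by (induction rule: tcar.induct) auto

lemma map_ktree_pi: "map_ktree f (pi s) = pi (map_ktree (map_ktree f) s)"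
proof (induction s)
  case (Star i \<sigma>)
  then show ?case
    by (simp add: multiset.map_comp cong: multiset.map_cong)
qed simp

lemma low_tle_pi_iff: "label w = 0 \<Longrightarrow> tle le w (pi s) \<longleftrightarrow> (\<exists>u\<in>set_ktree s. tle le w u)"
proof (induction s)
  case (Star i \<sigma>)
  then show ?case
    by (auto simp: tle_Star_iff)
qed simp

lemma tle_tle_iff_tle_pi:
  "\<forall>u\<in>set_ktree s. label u = 0 \<Longrightarrow> \<forall>u\<in>set_ktree t. label u = 0 \<Longrightarrow>
    tle (tle le) s t \<longleftrightarrow> tle le (pi s) (pi t)"
proof (induction t arbitrary: s)
  case (Bar v)
  then show ?case
    using tle_label_mono[of le "pi s" v] by (cases s) auto
next
  case (Star j \<tau>)
  have "(\<exists>\<sigma>. s = Star j \<sigma> \<and> mset_emb (tle (tle le)) \<sigma> \<tau>) \<longleftrightarrow>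
      (\<exists>\<sigma>'. pi s = Star (Suc j) \<sigma>' \<and> mset_emb (tle le) \<sigma>' (image_mset pi \<tau>))"
  proof (cases s)
    case (Star i \<sigma>)
    have "mset_emb (tle (tle le)) \<sigma> \<tau> \<longleftrightarrow> mset_emb (tle le) (image_mset pi \<sigma>) (image_mset pi \<tau>)"
      unfolding mset_emb_image_mset_iff using Star.IH Star.prems unfolding Star
      by (intro mset_emb_cong) auto
    then show ?thesis
      using Star by auto
  qed (use Star.prems in auto)
  moreover have "label s \<le> j \<longleftrightarrow> label (pi s) \<le> Suc j"
    using Star.prems by (cases s) auto
  moreover have "(\<exists>t\<in>#\<tau>. tle (tle le) s t) \<longleftrightarrow> (\<exists>t\<in>#image_mset pi \<tau>. tle le (pi s) t)"
    using Star.IH Star.prems by auto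
  ultimately show ?case
    unfolding pi.simps tle_Star_iff by blast
qed

lemma car_WO_TmO:
  "car (WO n (TmO (Suc n) X)) = {\<sigma>. set_mset \<sigma> \<subseteq> tcar n {u \<in> tcar (Suc n) (car X). label u = 0}}"
  by (simp add: car_WO car_TmO)

lemma label_set_ktree_WO_TmO:
  "\<sigma> \<in> car (WO n (TmO (Suc n) X)) \<Longrightarrow> s \<in># \<sigma> \<Longrightarrow> \<forall>u\<in>set_ktree s. label u = 0"
  unfolding car_WO_TmO by (auto dest!: set_ktree_tcar)

lemma mset_emb_image_pi_iff:
  assumes "\<forall>s\<in>#\<sigma> + \<tau>. \<forall>u\<in>set_ktree s. label u = 0"
  shows "mset_emb (tle le) (image_mset pi \<sigma>) (image_mset pi \<tau>) \<longleftrightarrow> mset_emb (tle (tle le)) \<sigma> \<tau>"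
  unfolding mset_emb_image_mset_iff
proof (intro mset_emb_cong ballI)
  fix a b assume "a \<in># \<sigma>" "b \<in># \<tau>"
  with assms have "\<forall>u\<in>set_ktree a. label u = 0" "\<forall>u\<in>set_ktree b. label u = 0"
    by auto
  then show "tle le (pi a) (pi b) \<longleftrightarrow> tle (tle le) a b"
    by (simp add: tle_tle_iff_tle_pi)
qed

lemma kfp_TmO:
  assumes "is_po X"
  shows "kfp (WO n) (WS n) X (TmO (Suc n) X) iota kappa"
proof -
  let ?Z = "TmO (Suc n) X"
  have fin_le_iff: "(\<exists>t\<in>#image_mset pi \<tau>. tle (leq X) w t) \<longleftrightarrow> fin_le (leq ?Z) {w} (WS n ?Z \<tau>)"
    if "label w = 0" for w \<tau>
    using that by (auto simp: leq_TmO WS_eq fin_le_def low_tle_pi_iff)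
  show ?thesis
    unfolding kfp_def
  proof (intro conjI ballI impI)
    show "is_po ?Z"
      using assms by (rule is_po_TmO)
  next
    show "iota x \<in> car ?Z" if "x \<in> car X" for x
      using that by (simp add: iota_def car_TmO)
  next
    show "kappa \<sigma> \<in> car ?Z" if "\<sigma> \<in> car (WO n ?Z)" for \<sigma>
      using that pi_tcar unfolding kappa_def car_WO_TmO car_TmO by auto
  next
    show "iota ` car X \<inter> kappa ` car (WO n ?Z) = {}"
      by (auto simp: iota_def kappa_def)
  next
    show "leq X x y" if "leq ?Z (iota x) (iota y)" for x y
      using that by (simp add: iota_def leq_TmO)
  next
    show "leq ?Z (iota x) (kappa \<tau>) \<longleftrightarrow> fin_le (leq ?Z) {iota x} (WS n ?Z \<tau>)" for x \<tau>
      using fin_le_iff[of "iota x" \<tau>] by (simp add: iota_def kappa_def leq_TmO tle_Star_iff)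
  next
    show "\<not> leq ?Z (kappa \<sigma>) (iota y)" for \<sigma> y
      by (simp add: iota_def kappa_def leq_TmO)
  next
    fix \<sigma> \<tau> assume \<sigma>: "\<sigma> \<in> car (WO n ?Z)" and \<tau>: "\<tau> \<in> car (WO n ?Z)"
    have "mset_emb (tle (leq X)) (image_mset pi \<sigma>) (image_mset pi \<tau>) \<longleftrightarrow> leq (WO n ?Z) \<sigma> \<tau>"
      unfolding leq_WO leq_TmO
      using label_set_ktree_WO_TmO[OF \<sigma>] label_set_ktree_WO_TmO[OF \<tau>]
      by (intro mset_emb_image_pi_iff) auto
    with fin_le_iff[of "kappa \<sigma>" \<tau>]
    show "leq ?Z (kappa \<sigma>) (kappa \<tau>) \<longleftrightarrow> leq (WO n ?Z) \<sigma> \<tau> \<or> fin_le (leq ?Z) {kappa \<sigma>} (WS n ?Z \<tau>)"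
      unfolding leq_TmO by (simp add: kappa_def tle_Star_iff)
  qed
qed

section \<open>Initiality\<close>

text \<open>For a Kruskal fixed point \<open>(Z, i, k)\<close>, \<open>kfp_map i k\<close> is the morphism from
  \<open>T\<^sup>-\<^sub>n\<^sub>+\<^sub>1(X)\<close> to \<open>Z\<close>; it is only meaningful on trees of label \<open>0\<close>. Its defining recursion
  \<open>kfp_map i k (Star 0 \<sigma>) = k (WM (kfp_map i k) (image_mset pi_inv \<sigma>))\<close> is not structural, so it is
  computed through \<open>kfp_tree i k\<close>, which equals \<open>map_ktree (kfp_map i k) \<circ> pi_inv\<close> (\<open>kfp_tree_eq\<close>).\<close>

primrec kfp_tree :: "('a \<Rightarrow> 'y) \<Rightarrow> ('y ktree multiset \<Rightarrow> 'y) \<Rightarrow> 'a ktree \<Rightarrow> 'y ktree" where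
  "kfp_tree i k (Bar x) = Bar (i x)"
| "kfp_tree i k (Star j \<sigma>) =
    (case j of 0 \<Rightarrow> Bar (k (image_mset (kfp_tree i k) \<sigma>)) | Suc j' \<Rightarrow> Star j' (image_mset (kfp_tree i k) \<sigma>))"

definition kfp_map :: "('a \<Rightarrow> 'y) \<Rightarrow> ('y ktree multiset \<Rightarrow> 'y) \<Rightarrow> 'a ktree \<Rightarrow> 'y" where
  "kfp_map i k t = (case kfp_tree i k t of Bar z \<Rightarrow> z)"

lemma kfp_tree_low: "label t = 0 \<Longrightarrow> kfp_tree i k t = Bar (kfp_map i k t)"
  by (cases t) (simp_all add: kfp_map_def)

lemma kfp_map_Bar [simp]: "kfp_map i k (Bar x) = i x"
  by (simp add: kfp_map_def)

lemma kfp_map_Star0 [simp]: "kfp_map i k (Star 0 \<sigma>) = k (image_mset (kfp_tree i k) \<sigma>)"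
  by (simp add: kfp_map_def)

lemma kfp_tree_eq: "kfp_tree i k t = map_ktree (kfp_map i k) (pi_inv t)"
proof (induction t)
  case (Star j \<sigma>)
  then show ?case
    by (cases j) (simp_all add: multiset.map_comp cong: multiset.map_cong)
qed simp

lemma kfp_tree_pi: "\<forall>u\<in>set_ktree s. label u = 0 \<Longrightarrow> kfp_tree i k (pi s) = map_ktree (kfp_map i k) s"
  by (simp add: kfp_tree_eq pi_inv_pi)

lemma set_ktree_pi_inv_child:
  assumes "Star j \<sigma> \<in> tcar (Suc n) (car X)" "t \<in># \<sigma>" "w \<in> set_ktree (pi_inv t)"
  shows "w \<in> car (TmO (Suc n) X)" "size w < size (Star j \<sigma>)"
proof -
  have "t \<in> tcar (Suc n) (car X)"
    using assms(1,2) by simp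
  then show "w \<in> car (TmO (Suc n) X)"
    unfolding car_TmO using pi_inv_tcar set_ktree_tcar assms(3) by blast
  show "size w < size (Star j \<sigma>)"
    using size_set_ktree_pi_inv[OF assms(3)] size_ktree_Star_member[OF assms(2), of j] by simp
qed

lemma kfp_tree_tcar:
  assumes "kfp (WO n) (WS n) X Z i k"
  shows "t \<in> tcar (Suc n) (car X) \<Longrightarrow> kfp_tree i k t \<in> tcar n (car Z)"
proof (induction rule: tcar.induct)
  case (bar x)
  with assms show ?case
    unfolding kfp_def by simp
next
  case (star j \<sigma>)
  then have "image_mset (kfp_tree i k) \<sigma> \<in> car (WO n Z)"
    by (auto simp: car_WO)
  with assms star show ?case
    unfolding kfp_def by (cases j) auto
qed

lemma kfp_map_car:
  "kfp (WO n) (WS n) X Z i k \<Longrightarrow> u \<in> car (TmO (Suc n) X) \<Longrightarrow> kfp_map i k u \<in> car Z"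
  using kfp_tree_tcar[of n X Z i k u] kfp_tree_low[of u i k] by (simp add: car_TmO)

lemma kfp_map_kappa:
  assumes "\<sigma> \<in> car (WO n (TmO (Suc n) X))"
  shows "kfp_map i k (kappa \<sigma>) = k (WM (kfp_map i k) \<sigma>)"
proof -
  have "image_mset (kfp_tree i k \<circ> pi) \<sigma> = image_mset (map_ktree (kfp_map i k)) \<sigma>"
    using label_set_ktree_WO_TmO[OF assms] by (intro multiset.map_cong0) (simp add: kfp_tree_pi)
  then show ?thesis
    by (simp add: kappa_def WM_eq MM_def multiset.map_comp)
qed

lemma kfp_tree_reflects:
  assumes "\<forall>u\<in>set_ktree (pi_inv s). \<forall>v\<in>set_ktree (pi_inv t). R (kfp_map i k u) (kfp_map i k v) \<longrightarrow> tle le u v"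
    and "tle R (kfp_tree i k s) (kfp_tree i k t)"
  shows "tle le s t"
proof -
  have "tle (\<lambda>u v. R (kfp_map i k u) (kfp_map i k v)) (pi_inv s) (pi_inv t)"
    using assms(2) by (simp add: kfp_tree_eq tle_map_ktree_iff)
  then have "tle (tle le) (pi_inv s) (pi_inv t)"
    using assms(1) by (rule tle_mono_on)
  moreover have "\<forall>u\<in>set_ktree (pi_inv s). label u = 0" "\<forall>u\<in>set_ktree (pi_inv t). label u = 0"
    using label_set_ktree_pi_inv by blast+
  ultimately show ?thesis
    by (simp add: tle_tle_iff_tle_pi)
qed

lemma mset_emb_kfp_tree_reflects:
  assumes "\<forall>a\<in>#\<sigma>. \<forall>b\<in>#\<tau>. \<forall>u\<in>set_ktree (pi_inv a). \<forall>v\<in>set_ktree (pi_inv b).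
      R (kfp_map i k u) (kfp_map i k v) \<longrightarrow> tle le u v"
    and "mset_emb (tle R) (image_mset (kfp_tree i k) \<sigma>) (image_mset (kfp_tree i k) \<tau>)"
  shows "mset_emb (tle le) \<sigma> \<tau>"
  using assms(2) unfolding mset_emb_image_mset_iff
proof (rule mset_emb_mono, intro ballI impI)
  fix a b assume "a \<in># \<sigma>" "b \<in># \<tau>" "tle R (kfp_tree i k a) (kfp_tree i k b)"
  with assms(1) show "tle le a b"
    using kfp_tree_reflects[of a b R i k le] by blast
qed

lemma kfp_map_le_kfp_map_Star0:
  assumes kfp: "kfp (WO n) (WS n) X Z i k"
    and u: "u \<in> car (TmO (Suc n) X)" and \<tau>: "Star 0 \<tau> \<in> car (TmO (Suc n) X)"
    and le: "leq Z (kfp_map i k u) (kfp_map i k (Star 0 \<tau>))"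
  shows "(\<exists>\<sigma>. u = Star 0 \<sigma> \<and>
            mset_emb (tle (leq Z)) (image_mset (kfp_tree i k) \<sigma>) (image_mset (kfp_tree i k) \<tau>))
    \<or> (\<exists>t\<in>#\<tau>. \<exists>w\<in>set_ktree (pi_inv t). leq Z (kfp_map i k u) (kfp_map i k w))"
proof -
  have car_image: "image_mset (kfp_tree i k) \<rho> \<in> car (WO n Z)" if "Star 0 \<rho> \<in> car (TmO (Suc n) X)" for \<rho>
    using that kfp_tree_tcar[OF kfp] by (auto simp: car_TmO car_WO)
  have fin_le_iff: "fin_le (leq Z) {z} (WS n Z (image_mset (kfp_tree i k) \<tau>)) \<longleftrightarrow>
      (\<exists>t\<in>#\<tau>. \<exists>w\<in>set_ktree (pi_inv t). leq Z z (kfp_map i k w))" for z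
    by (auto simp: fin_le_def WS_eq kfp_tree_eq ktree.set_map)
  from u consider (Bar) x where "u = Bar x" "x \<in> car X" | (Star0) \<sigma> where "u = Star 0 \<sigma>"
    by (cases u) (auto simp: car_TmO)
  then show ?thesis
  proof cases
    case Bar
    then show ?thesis
      using kfp le car_image[OF \<tau>] fin_le_iff unfolding kfp_def by simp
  next
    case Star0
    then show ?thesis
      using kfp le car_image[OF \<tau>] car_image[of \<sigma>] u fin_le_iff unfolding kfp_def leq_WO by simp
  qed
qed

lemma kfp_map_le_kfp_map_Bar:
  assumes kfp: "kfp (WO n) (WS n) X Z i k"
    and u: "u \<in> car (TmO (Suc n) X)" and y: "y \<in> car X"
    and le: "leq Z (kfp_map i k u) (i y)"
  shows "\<exists>x. u = Bar x \<and> leq X x y"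
proof -
  from u consider (Bar) x where "u = Bar x" "x \<in> car X" | (Star0) \<sigma> where "u = Star 0 \<sigma>"
    by (cases u) (auto simp: car_TmO)
  then show ?thesis
  proof cases
    case Bar
    with kfp le y show ?thesis
      unfolding kfp_def by simp
  next
    case Star0
    then have "image_mset (kfp_tree i k) \<sigma> \<in> car (WO n Z)"
      using u kfp_tree_tcar[OF kfp] by (auto simp: car_TmO car_WO)
    with Star0 kfp le y show ?thesis
      unfolding kfp_def by simp
  qed
qed

lemma kfp_map_reflects:
  assumes kfp: "kfp (WO n) (WS n) X Z i k"
  shows "u \<in> car (TmO (Suc n) X) \<Longrightarrow> v \<in> car (TmO (Suc n) X) \<Longrightarrow>
    leq Z (kfp_map i k u) (kfp_map i k v) \<Longrightarrow> tle (leq X) u v"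
proof (induction "size u + size v" arbitrary: u v rule: less_induct)
  case less
  from less.prems(2) consider (Bar) y where "v = Bar y" "y \<in> car X" | (Star0) \<tau> where "v = Star 0 \<tau>"
    by (cases v) (auto simp: car_TmO)
  then show ?case
  proof cases
    case Bar
    then obtain x where "u = Bar x" "leq X x y"
      using kfp_map_le_kfp_map_Bar[OF kfp less.prems(1)] less.prems(3) by auto
    with Bar show ?thesis
      by simp
  next
    case Star0
    have v: "Star 0 \<tau> \<in> tcar (Suc n) (car X)" and u: "label u = 0"
      using less.prems(1,2) Star0 by (simp_all add: car_TmO)
    from kfp_map_le_kfp_map_Star0[OF kfp less.prems(1)] less.prems(2,3) Star0 consider
        (emb) \<sigma> where "u = Star 0 \<sigma>"
          "mset_emb (tle (leq Z)) (image_mset (kfp_tree i k) \<sigma>) (image_mset (kfp_tree i k) \<tau>)"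
      | (child) t w where "t \<in># \<tau>" "w \<in> set_ktree (pi_inv t)" "leq Z (kfp_map i k u) (kfp_map i k w)"
      by blast
    then show ?thesis
    proof cases
      case emb
      have "Star 0 \<sigma> \<in> tcar (Suc n) (car X)"
        using less.prems(1) emb(1) by (simp add: car_TmO)
      note leaves = set_ktree_pi_inv_child[OF this] set_ktree_pi_inv_child[OF v]
      have "mset_emb (tle (leq X)) \<sigma> \<tau>"
      proof (rule mset_emb_kfp_tree_reflects[OF _ emb(2)], intro ballI impI)
        fix a b w w' assume a: "a \<in># \<sigma>" and b: "b \<in># \<tau>"
          and w: "w \<in> set_ktree (pi_inv a)" and w': "w' \<in> set_ktree (pi_inv b)"
          and le: "leq Z (kfp_map i k w) (kfp_map i k w')"
        have "size w + size w' < size u + size v"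
          using leaves(2)[OF a w] leaves(4)[OF b w'] emb(1) Star0 by simp
        with le leaves(1)[OF a w] leaves(3)[OF b w'] show "tle (leq X) w w'"
          using less.hyps by blast
      qed
      then show ?thesis
        using emb(1) Star0 by (simp add: tle_Star_iff)
    next
      case child
      note leaf = set_ktree_pi_inv_child[OF v child(1,2)]
      have "tle (leq X) u w"
        using less.hyps[of u w] less.prems(1) child(3) leaf Star0 by simp
      then have "tle (leq X) u t"
        using low_tle_pi_iff[OF u, of "leq X" "pi_inv t"] child(2) by auto
      then show ?thesis
        using child(1) u Star0 by (simp add: tle_Star_if_child)
    qed
  qed
qed

lemma kfp_map_unique:
  assumes iota: "\<forall>x\<in>car X. g (iota x) = i x"
    and kappa: "\<forall>\<sigma>\<in>car (WO n (TmO (Suc n) X)). g (kappa \<sigma>) = k (WM g \<sigma>)"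
  shows "u \<in> car (TmO (Suc n) X) \<Longrightarrow> g u = kfp_map i k u"
proof (induction "size u" arbitrary: u rule: less_induct)
  case less
  from less.prems consider (Bar) x where "u = Bar x" "x \<in> car X"
    | (Star0) \<sigma> where "u = Star 0 \<sigma>" "u \<in> tcar (Suc n) (car X)"
    by (cases u) (auto simp: car_TmO)
  then show ?case
  proof cases
    case Bar
    with iota show ?thesis
      by (simp add: iota_def)
  next
    case Star0
    let ?\<rho> = "image_mset pi_inv \<sigma>"
    have "?\<rho> \<in> car (WO n (TmO (Suc n) X))"
      using Star0 pi_inv_tcar by (auto simp: car_WO_TmO)
    moreover have "kappa ?\<rho> = u"
      using Star0(1) by (simp add: kappa_def multiset.map_comp multiset.map_ident_strong)
    ultimately have "g u = k (image_mset (map_ktree g \<circ> pi_inv) \<sigma>)"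
      using kappa by (metis WM_eq MM_def multiset.map_comp)
    also have "image_mset (map_ktree g \<circ> pi_inv) \<sigma> = image_mset (kfp_tree i k) \<sigma>"
    proof (rule multiset.map_cong0)
      fix t assume t: "t \<in> set_mset \<sigma>"
      have "g w = kfp_map i k w" if "w \<in> set_ktree (pi_inv t)" for w
        using less.hyps set_ktree_pi_inv_child[OF Star0(2)[unfolded Star0(1)] t that] Star0(1) by simp
      then show "(map_ktree g \<circ> pi_inv) t = kfp_tree i k t"
        by (simp add: kfp_tree_eq cong: ktree.map_cong)
    qed
    finally show ?thesis
      using Star0(1) by simp
  qed
qed

lemma initial_kfp_TmO:
  assumes "is_po X"
  shows "initial_kfp (WO n) (WS n) (WO n :: 'y po \<Rightarrow> _) (WS n) WM X (TmO (Suc n) X) iota kappa"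
  unfolding initial_kfp_def
proof (intro conjI allI impI)
  show "kfp (WO n) (WS n) X (TmO (Suc n) X) iota kappa"
    using assms by (rule kfp_TmO)
next
  fix Z :: "'y po" and i k
  assume kfp: "kfp (WO n) (WS n) X Z i k"
  have "qemb (kfp_map i k) (TmO (Suc n) X) Z"
    unfolding qemb_def leq_TmO using kfp_map_car[OF kfp] kfp_map_reflects[OF kfp] by blast
  moreover have "\<forall>x\<in>car X. kfp_map i k (iota x) = i x"
    by (simp add: iota_def)
  moreover have "\<forall>\<sigma>\<in>car (WO n (TmO (Suc n) X)). kfp_map i k (kappa \<sigma>) = k (WM (kfp_map i k) \<sigma>)"
    by (blast intro: kfp_map_kappa)
  ultimately show "\<exists>f. qemb f (TmO (Suc n) X) Z \<and> (\<forall>x\<in>car X. f (iota x) = i x) \<and>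
      (\<forall>\<sigma>\<in>car (WO n (TmO (Suc n) X)). f (kappa \<sigma>) = k (WM f \<sigma>)) \<and>
      (\<forall>g. qemb g (TmO (Suc n) X) Z \<and> (\<forall>x\<in>car X. g (iota x) = i x) \<and>
         (\<forall>\<sigma>\<in>car (WO n (TmO (Suc n) X)). g (kappa \<sigma>) = k (WM g \<sigma>)) \<longrightarrow>
         (\<forall>z\<in>car (TmO (Suc n) X). g z = f z))"
    using kfp_map_unique by blast
qed

lemma kappa_natural: "map_ktree f (kappa \<sigma>) = kappa (WM (map_ktree f) \<sigma>)"
  by (simp add: kappa_def WM_eq MM_def multiset.map_comp map_ktree_pi comp_def)

theorem theorem6p5:
  fixes n :: nat
  shows
   \<comment> \<open>\<open>M \<circ> T_n\<close> is a normal PO-dilator\<close>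
   "po_dilator (WO n :: 'a po \<Rightarrow> _) (WS n) (WO n :: 'b po \<Rightarrow> _) (WS n)
      (WM :: ('a \<Rightarrow> 'a) \<Rightarrow> _) (WM :: ('a \<Rightarrow> 'b) \<Rightarrow> _) (WM :: ('b \<Rightarrow> 'c) \<Rightarrow> _) (WM :: ('a \<Rightarrow> 'c) \<Rightarrow> _)
    \<and> normal (WO n :: 'a po \<Rightarrow> _) (WS n)
   \<comment> \<open>\<open>T_{n+1}^-\<close> is a normal PO-dilator\<close>
    \<and> po_dilator (TmO (Suc n) :: 'a po \<Rightarrow> _) TmS (TmO (Suc n) :: 'b po \<Rightarrow> _) TmS
      (map_ktree :: ('a \<Rightarrow> 'a) \<Rightarrow> _) (map_ktree :: ('a \<Rightarrow> 'b) \<Rightarrow> _)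
      (map_ktree :: ('b \<Rightarrow> 'c) \<Rightarrow> _) (map_ktree :: ('a \<Rightarrow> 'c) \<Rightarrow> _)
    \<and> normal (TmO (Suc n) :: 'a po \<Rightarrow> _) TmS
   \<comment> \<open>(i) initial Kruskal fixed points\<close>
    \<and> (\<forall>X :: 'a po. is_po X \<longrightarrow>
         initial_kfp (WO n) (WS n) (WO n :: 'y po \<Rightarrow> _) (WS n) WM
           X (TmO (Suc n) X) iota kappa)
   \<comment> \<open>(ii) naturality\<close>
    \<and> (\<forall>(X :: 'a po) (Y :: 'b po) f. is_po X \<and> is_po Y \<and> qemb f X Y \<longrightarrow>
         (\<forall>x\<in>car X. iota (f x) = map_ktree f (iota x)) \<and>
         (\<forall>\<sigma>\<in>car (WO n (TmO (Suc n) X)). map_ktree f (kappa \<sigma>) = kappa (WM (map_ktree f) \<sigma>)))"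
  by (simp add: po_dilator_WO normal_WO po_dilator_TmO normal_TmO initial_kfp_TmO iota_def kappa_natural)

end
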